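(* Let $0<\epsilon\le1$ and suppose $L^*\ge\frac{1}{\epsilon^3}\log T$. Let $\sigma_{temp}$ be the random tentative schedule defined below. Then for any interval $I=[t_1,t_2]\subseteq[1,T]$, $\Pr[OF(I)\ge 6\epsilon L^*]\le 1/T^3$.
   Context: Broadcast scheduling with maximum flow time: a set $\mathcal{P}$ of unit-sized pages, requests $\rho$ with integer release time $r_\rho\ge0$ and page $p_\rho$; $L^*$ is the optimal maximum flow time; $T=\max_\rho r_\rho+n$ is the time horizon ($n=|\mathcal{P}|$); $\log$ is natural. Assume any two requests for the same page with no request for that page released strictly between them have release times differing by at most $L^*-1$. For page $p$ let $\mathcal{T}_p$ be the set of release times of requests for $p$ and $W_p=[\min\mathcal{T}_p+1,\max\mathcal{T}_p+L^*]$. Let $x^*=(x^*_{p,t})_{p\in\mathcal{P},t\in[T]}$ be a feasible solution of the linear program: $\sum_{t'=t+1}^{t+L^*}x_{p,t'}\ge1$ for all $p$ and $t\in\mathcal{T}_p$; $\sum_{p}x_{p,t}\le1$ for all $t\in[T]$; $x_{p,t}=0$ for $t\notin W_p$; $x_{p,t}\ge0$. Let $\mathcal{G}$ be a partition of $\mathcal{P}$ into at most $2L^*$ groups such that distinct pages in the same group have disjoint windows $W_p$. For each group $g$ let $y^*_{g,t}=\sum_{p\in g}\sum_{t'\le t}x^*_{p,t'}$, and choose $\alpha_g$ uniformly at random from $[0,1]$, independently over groups. The tentative schedule $\sigma_{temp}$ (which may transmit several pages at one time) does the following for each group $g$: at every time $t$ such that $y^*_{g,t-1}<k+\alpha_g\le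 y^*_{g,t}$ for some integer $k$, it transmits the (unique) page $p\in g$ with $x^*_{p,t}>0$. Let $Q_{temp}(I)$ be the number of transmissions made by $\sigma_{temp}$ during $I$, and $OF([t_1,t_2]):=\max\{Q_{temp}([t_1,t_2])-(t_2-t_1+1),0\}$. *)

theory Defs
  imports "HOL-Probability.Probability"
begin

text \<open>A (broadcast) schedule transmits at most one page per time slot: sigma :: nat => 'p option.
  A request rho is served at the first transmission of pg rho at a time t > rel rho; its flow
  time is t - rel rho. Hence the maximum flow time of sigma is at most L iff every request
  is served within L steps.\<close>

definition opt_max_flow :: "'r set \<Rightarrow> ('r \<Rightarrow> nat) \<Rightarrow> ('r \<Rightarrow> 'p) \<Rightarrow> nat" where
  "opt_max_flow Req rel pg =
     (LEAST L. \<exists>\<sigma> :: nat \<Rightarrow> 'p option. \<forall>\<rho>\<in>Req.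
        \<exists>t. rel \<rho> < t \<and> t \<le> rel \<rho> + L \<and> \<sigma> t = Some (pg \<rho>))"

definition horizon :: "'p set \<Rightarrow> 'r set \<Rightarrow> ('r \<Rightarrow> nat) \<Rightarrow> nat" where
  "horizon P Req rel = (if Req = {} then 0 else Max (rel ` Req)) + card P"

definition rel_times :: "'r set \<Rightarrow> ('r \<Rightarrow> nat) \<Rightarrow> ('r \<Rightarrow> 'p) \<Rightarrow> 'p \<Rightarrow> nat set" where
  "rel_times Req rel pg p = {rel \<rho> | \<rho>. \<rho> \<in> Req \<and> pg \<rho> = p}"

definition window :: "'r set \<Rightarrow> ('r \<Rightarrow> nat) \<Rightarrow> ('r \<Rightarrow> 'p) \<Rightarrow> nat \<Rightarrow> 'p \<Rightarrow> nat set" where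
  "window Req rel pg L p =
     (if rel_times Req rel pg p = {} then {}
      else {Min (rel_times Req rel pg p) + 1 .. Max (rel_times Req rel pg p) + L})"

definition lp_feasible ::
  "'p set \<Rightarrow> 'r set \<Rightarrow> ('r \<Rightarrow> nat) \<Rightarrow> ('r \<Rightarrow> 'p) \<Rightarrow> nat \<Rightarrow> nat \<Rightarrow> ('p \<Rightarrow> nat \<Rightarrow> real) \<Rightarrow> bool" where
  "lp_feasible P Req rel pg L T x \<longleftrightarrow>
     (\<forall>p\<in>P. \<forall>t\<in>rel_times Req rel pg p. (\<Sum>t'\<in>{t+1..t+L} \<inter> {1..T}. x p t') \<ge> 1) \<and>
     (\<forall>t\<in>{1..T}. (\<Sum>p\<in>P. x p t) \<le> 1) \<and>
     (\<forall>p\<in>P. \<forall>t\<in>{1..T}. t \<notin> window Req rel pg L p \<longrightarrow> x p t = 0) \<and>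
     (\<forall>p\<in>P. \<forall>t\<in>{1..T}. x p t \<ge> 0)"

definition y_cum :: "('p \<Rightarrow> nat \<Rightarrow> real) \<Rightarrow> 'p set \<Rightarrow> nat \<Rightarrow> real" where
  "y_cum x g t = (\<Sum>p\<in>g. \<Sum>t'\<in>{1..t}. x p t')"

definition tentative_schedule ::
  "'p set set \<Rightarrow> ('p \<Rightarrow> nat \<Rightarrow> real) \<Rightarrow> nat \<Rightarrow> ('p set \<Rightarrow> real) \<Rightarrow> ('p \<times> nat) set" where
  "tentative_schedule G x T \<alpha> =
     {(p, t). \<exists>g\<in>G. p \<in> g \<and> t \<in> {1..T} \<and> x p t > 0 \<and>
        (\<exists>k::int. y_cum x g (t - 1) < of_int k + \<alpha> g \<and> of_int k + \<alpha> g \<le> y_cum x g t)}"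

definition Q_temp ::
  "'p set set \<Rightarrow> ('p \<Rightarrow> nat \<Rightarrow> real) \<Rightarrow> nat \<Rightarrow> ('p set \<Rightarrow> real) \<Rightarrow> nat set \<Rightarrow> nat" where
  "Q_temp G x T \<alpha> I = card {(p, t) \<in> tentative_schedule G x T \<alpha>. t \<in> I}"

definition OF ::
  "'p set set \<Rightarrow> ('p \<Rightarrow> nat \<Rightarrow> real) \<Rightarrow> nat \<Rightarrow> ('p set \<Rightarrow> real) \<Rightarrow> nat \<Rightarrow> nat \<Rightarrow> real" where
  "OF G x T \<alpha> t1 t2 = max (real (Q_temp G x T \<alpha> {t1..t2}) - (real t2 - real t1 + 1)) 0"

end

theory Submission
  imports Defs
begin

(*
  Fix a group g and write y for its cumulative LP mass. The tentative schedule transmits a page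
  of g at time t exactly when (y(t-1), y(t)] contains a point of alpha_g + Z. As y is
  nondecreasing and, the windows within g being disjoint, at most one page of g is active at a
  time, g transmits during [t1, t2] at most N_g = floor(y(t2) - alpha_g) - floor(y(t1-1) - alpha_g)
  times. For uniform alpha_g, N_g takes one of two consecutive integer values and has mean
  y(t2) - y(t1-1); these means add up to at most t2 - t1 + 1 by the capacity constraint of the LP.
  An overflow of 6 eps Lstar therefore makes the sum of the at most 2 Lstar independent N_g
  exceed its mean by 6 eps Lstar, which by Hoeffding's inequality has probability at most
  exp(-36 eps^2 Lstar) <= 1/T^3.
*)

lemma floor_diff_eq_indicator:
  fixes c a :: real
  assumes "0 \<le> a" "a \<le> 1"
  shows "real_of_int \<lfloor>c - a\<rfloor> = real_of_int \<lfloor>c\<rfloor> - indicator {frac c<..} a"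
proof (cases "frac c < a")
  case True
  then have "\<lfloor>c - a\<rfloor> = \<lfloor>c\<rfloor> - 1"
    using assms by (simp add: floor_eq_iff frac_def) linarith
  then show ?thesis using True by simp
next
  case False
  then have "\<lfloor>c - a\<rfloor> = \<lfloor>c\<rfloor>"
    using assms by (simp add: floor_eq_iff frac_def) linarith
  then show ?thesis using False by simp
qed

lemma has_bochner_integral_floor_uniform:
  fixes c :: real
  shows "has_bochner_integral (uniform_measure lborel {0..1})
           (\<lambda>a. real_of_int \<lfloor>c - a\<rfloor>) (c - 1)"
proof -
  let ?U = "uniform_measure lborel {0..1::real}"
  interpret U: prob_space ?U
    by (rule prob_space_uniform_measure) simp_all
  have "measure ?U {frac c<..}
          = measure lborel ({0..1} \<inter> {frac c<..}) / measure lborel {0..1::real}"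
    by (rule measure_uniform_measure) auto
  also have "{0..1::real} \<inter> {frac c<..} = {frac c<..1}"
    using frac_ge_0[of c] by (auto simp del: frac_ge_0)
  finally have measure_frac: "measure ?U {frac c<..} = 1 - frac c"
    using frac_lt_1[of c] by simp
  have "has_bochner_integral ?U (indicator {frac c<..}) (measure ?U {frac c<..})"
    using U.emeasure_finite[of "{frac c<..}"]
    by (intro has_bochner_integral_real_indicator)
      (simp_all add: less_top[symmetric] del: emeasure_uniform_measure)
  then have "has_bochner_integral ?U (indicator {frac c<..}) (1 - frac c)"
    unfolding measure_frac .
  then have "has_bochner_integral ?U (\<lambda>a. real_of_int \<lfloor>c\<rfloor> - indicator {frac c<..} a)
               (\<lfloor>c\<rfloor> - (1 - frac c))"
    by (intro has_bochner_integral_diff) (simp_all add: has_bochner_integral_iff)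
  then have "has_bochner_integral ?U (\<lambda>a. real_of_int \<lfloor>c\<rfloor> - indicator {frac c<..} a) (c - 1)"
    by (simp add: frac_def)
  moreover have "AE a in ?U. real_of_int \<lfloor>c - a\<rfloor> = real_of_int \<lfloor>c\<rfloor> - indicator {frac c<..} a"
    by (rule AE_uniform_measureI) (auto intro: floor_diff_eq_indicator)
  ultimately show ?thesis
    by (subst has_bochner_integral_cong_AE) auto
qed

lemma indep_vars_PiM_components:
  assumes "I \<noteq> {}" and "\<And>i. i \<in> I \<Longrightarrow> prob_space (M i)"
  shows "prob_space.indep_vars (PiM I M) M (\<lambda>i \<omega>. \<omega> i) I"
proof -
  interpret prob_space "PiM I M" by (rule prob_space_PiM) (rule assms(2))
  have "distr (PiM I M) (PiM I M) (\<lambda>\<omega>. \<lambda>i\<in>I. \<omega> i)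
          = distr (PiM I M) (PiM I M) (\<lambda>\<omega>. \<omega>)"
    by (rule distr_cong) (auto simp: space_PiM PiE_restrict)
  also have "\<dots> = PiM I M"
    by simp
  also have "\<dots> = (\<Pi>\<^sub>M i\<in>I. distr (PiM I M) (M i) (\<lambda>\<omega>. \<omega> i))"
    by (rule PiM_cong) (auto intro: distr_PiM_component[symmetric] assms(2))
  finally show ?thesis
    by (subst indep_vars_iff_distr_eq_PiM'[OF assms(1)]) auto
qed

lemma floor_diff_sub_floor_diff_bounds:
  fixes a b t :: real
  shows "\<lfloor>b - a\<rfloor> \<le> \<lfloor>b - t\<rfloor> - \<lfloor>a - t\<rfloor> \<and>
         \<lfloor>b - t\<rfloor> - \<lfloor>a - t\<rfloor> \<le> \<lfloor>b - a\<rfloor> + 1"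
  using floor_add[of "a - t" "b - a"] by (simp split: if_splits)

lemma prob_sum_floor_diffs_ge:
  fixes I :: "'i set" and A B :: "'i \<Rightarrow> real" and c n :: real
  assumes "finite I" and "0 < c" and "real (card I) \<le> n"
  defines "M \<equiv> PiM I (\<lambda>_. uniform_measure lborel {0..1::real})"
    and "F \<equiv> {\<alpha> \<in> space (PiM I (\<lambda>_. uniform_measure lborel {0..1::real})).
                 (\<Sum>i\<in>I. B i - A i) + c \<le>
                 (\<Sum>i\<in>I. real_of_int (\<lfloor>B i - \<alpha> i\<rfloor> - \<lfloor>A i - \<alpha> i\<rfloor>))}"
  shows "F \<in> sets M \<and> measure M F \<le> exp (- 2 * c\<^sup>2 / n)"
proof (cases "I = {}")
  case True
  then have "F = {}"
    using \<open>0 < c\<close> unfolding F_def by simp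
  then show ?thesis
    by simp
next
  case False
  let ?U = "uniform_measure lborel {0..1::real}"
  define X where "X = (\<lambda>i (\<alpha> :: 'i \<Rightarrow> real). real_of_int (\<lfloor>B i - \<alpha> i\<rfloor> - \<lfloor>A i - \<alpha> i\<rfloor>))"
  define a where "a = (\<lambda>i. real_of_int \<lfloor>B i - A i\<rfloor>)"
  interpret U: prob_space ?U
    by (rule prob_space_uniform_measure) simp_all
  interpret M: prob_space M
    unfolding M_def by (rule prob_space_PiM) (rule U.prob_space_axioms)
  have offset_measurable:
    "(\<lambda>v. real_of_int (\<lfloor>B i - v\<rfloor> - \<lfloor>A i - v\<rfloor>)) \<in> borel_measurable ?U" for i
    by measurable
  have "M.indep_vars (\<lambda>_. ?U) (\<lambda>i \<alpha>. \<alpha> i) I"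
    unfolding M_def by (rule indep_vars_PiM_components[OF False U.prob_space_axioms])
  then have indep: "M.indep_vars (\<lambda>_. borel) X I"
    unfolding X_def by (rule M.indep_vars_compose2[OF _ offset_measurable])
  have expectation: "M.expectation (X i) = B i - A i" if "i \<in> I" for i
  proof -
    have "M.expectation (X i)
            = integral\<^sup>L (distr M ?U (\<lambda>\<alpha>. \<alpha> i)) (\<lambda>v. real_of_int (\<lfloor>B i - v\<rfloor> - \<lfloor>A i - v\<rfloor>))"
      unfolding X_def M_def
      by (rule integral_distr[symmetric]) (auto intro: measurable_component_singleton that)
    also have "distr M ?U (\<lambda>\<alpha>. \<alpha> i) = ?U"
      unfolding M_def by (rule distr_PiM_component) (auto intro: U.prob_space_axioms that)
    also have "integral\<^sup>L ?U (\<lambda>v. real_of_int (\<lfloor>B i - v\<rfloor> - \<lfloor>A i - v\<rfloor>)) = (B i - 1) - (A i - 1)"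
      using has_bochner_integral_diff[OF has_bochner_integral_floor_uniform has_bochner_integral_floor_uniform]
      by (simp add: has_bochner_integral_integral_eq)
    finally show ?thesis by simp
  qed
  interpret Hoeffding_ineq M I X a "\<lambda>i. real_of_int (\<lfloor>B i - A i\<rfloor> + 1)"
      "\<Sum>i\<in>I. M.expectation (X i)"
  proof unfold_locales
    show "AE \<alpha> in M. X i \<alpha> \<in> {a i..real_of_int (\<lfloor>B i - A i\<rfloor> + 1)}" for i
      unfolding X_def a_def atLeastAtMost_iff of_int_le_iff
      by (intro AE_I2 floor_diff_sub_floor_diff_bounds)
  qed (simp_all add: \<open>finite I\<close> indep)
  have F_eq: "F = {\<alpha> \<in> space M. (\<Sum>i\<in>I. B i - A i) + c \<le> (\<Sum>i\<in>I. X i \<alpha>)}"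
    unfolding F_def X_def M_def ..
  have "(\<lambda>\<alpha>. \<Sum>i\<in>I. X i \<alpha>) \<in> borel_measurable M"
    by (intro borel_measurable_sum random_variable)
  then have "F \<in> sets M"
    unfolding F_eq borel_measurable_iff_ge by blast
  have "measure M F \<le> exp (- 2 * c\<^sup>2 / real (card I))"
    unfolding F_eq
    using Hoeffding_ineq_ge[of c] \<open>0 < c\<close> \<open>finite I\<close> False
    by (simp add: expectation a_def card_gt_0_iff)
  also have "\<dots> \<le> exp (- 2 * c\<^sup>2 / n)"
  proof -
    have "0 < real (card I)"
      using \<open>finite I\<close> False by (simp add: card_gt_0_iff)
    then show ?thesis
      using \<open>real (card I) \<le> n\<close> by (simp add: frac_le)
  qed
  finally show ?thesis
    using \<open>F \<in> sets M\<close> by simp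
qed

lemma y_cum_mono:
  assumes "finite g" and "\<forall>p\<in>g. \<forall>t\<in>{1..T}. 0 \<le> x p t" and "s \<le> s'" and "s' \<le> T"
  shows "y_cum x g s \<le> y_cum x g s'"
  unfolding y_cum_def
proof (rule sum_mono)
  fix p assume "p \<in> g"
  then show "(\<Sum>t\<in>{1..s}. x p t) \<le> (\<Sum>t\<in>{1..s'}. x p t)"
    using assms by (intro sum_mono2) auto
qed

lemma y_cum_diff:
  assumes "1 \<le> t1" and "t1 \<le> t2"
  shows "y_cum x g t2 - y_cum x g (t1 - 1) = (\<Sum>p\<in>g. \<Sum>t\<in>{t1..t2}. x p t)"
proof -
  have "{1..t2} = {1..t1 - 1} \<union> {t1..t2}"
    using assms by auto
  then have "(\<Sum>t\<in>{1..t2}. x p t) = (\<Sum>t\<in>{1..t1 - 1}. x p t) + (\<Sum>t\<in>{t1..t2}. x p t)" for p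
    by (simp add: sum.union_disjoint)
  then show ?thesis
    unfolding y_cum_def by (simp add: sum_subtractf[symmetric])
qed

lemma card_level_crossings_le:
  fixes y :: "nat \<Rightarrow> real" and a :: real
  assumes mono: "\<And>s s'. s \<le> s' \<Longrightarrow> s' \<le> t2 \<Longrightarrow> y s \<le> y s'"
    and "1 \<le> t1" and "t1 \<le> t2"
  shows "int (card {t \<in> {t1..t2}. \<exists>k::int. y (t - 1) < k + a \<and> k + a \<le> y t})
           \<le> \<lfloor>y t2 - a\<rfloor> - \<lfloor>y (t1 - 1) - a\<rfloor>"
proof -
  define S where "S = {t \<in> {t1..t2}. \<exists>k::int. y (t - 1) < k + a \<and> k + a \<le> y t}"
  define d where "d t = \<lfloor>y t - a\<rfloor> - \<lfloor>y (t - 1) - a\<rfloor>" for t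
  have d_nonneg: "0 \<le> d t" if "t \<le> t2" for t
    using mono[of "t - 1" t] that unfolding d_def by (simp add: floor_mono)
  have d_crossing: "1 \<le> d t" if t: "t \<in> S" for t
  proof -
    obtain k :: int where "y (t - 1) < k + a" "k + a \<le> y t"
      using t unfolding S_def by blast
    then have "\<lfloor>y (t - 1) - a\<rfloor> < k" and "k \<le> \<lfloor>y t - a\<rfloor>"
      by (simp_all add: floor_less_iff le_floor_iff)
    then show ?thesis unfolding d_def by linarith
  qed
  have "int (card S) = (\<Sum>t\<in>S. 1)"
    by simp
  also have "\<dots> \<le> (\<Sum>t\<in>S. d t)"
    by (rule sum_mono) (rule d_crossing)
  also have "\<dots> \<le> (\<Sum>t\<in>{t1..t2}. d t)"
    by (rule sum_mono2) (auto simp: S_def intro: d_nonneg)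
  also have "\<dots> = \<lfloor>y t2 - a\<rfloor> - \<lfloor>y (t1 - 1) - a\<rfloor>"
    using sum_telescope''[of "t1 - 1" t2 "\<lambda>t. \<lfloor>y t - a\<rfloor>"] assms(2,3) unfolding d_def by simp
  finally show ?thesis unfolding S_def .
qed

lemma card_group_transmissions_le_crossings:
  assumes "g \<in> G" and disjoint: "\<forall>g\<in>G. \<forall>g'\<in>G. g \<noteq> g' \<longrightarrow> g \<inter> g' = {}"
    and unique: "\<And>p p' t. p \<in> g \<Longrightarrow> p' \<in> g \<Longrightarrow> t \<in> {1..T} \<Longrightarrow>
                   0 < x p t \<Longrightarrow> 0 < x p' t \<Longrightarrow> p = p'"
  shows "card {(p, t) \<in> tentative_schedule G x T \<alpha>. t \<in> {t1..t2} \<and> p \<in> g}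
           \<le> card {t \<in> {t1..t2}. \<exists>k::int. y_cum x g (t - 1) < k + \<alpha> g \<and> k + \<alpha> g \<le> y_cum x g t}"
proof (rule card_inj_on_le)
  show "inj_on snd {(p, t) \<in> tentative_schedule G x T \<alpha>. t \<in> {t1..t2} \<and> p \<in> g}"
    by (rule inj_onI) (auto simp: tentative_schedule_def intro: unique)
  show "snd ` {(p, t) \<in> tentative_schedule G x T \<alpha>. t \<in> {t1..t2} \<and> p \<in> g}
          \<subseteq> {t \<in> {t1..t2}. \<exists>k::int. y_cum x g (t - 1) < k + \<alpha> g \<and> k + \<alpha> g \<le> y_cum x g t}"
    using \<open>g \<in> G\<close> disjoint by (fastforce simp: tentative_schedule_def)
qed simp

lemma card_group_transmissions_le_floor_diff:
  assumes "finite P" and "g \<in> G" and "g \<subseteq> P"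
    and disjoint: "\<forall>g\<in>G. \<forall>g'\<in>G. g \<noteq> g' \<longrightarrow> g \<inter> g' = {}"
    and windows: "\<forall>p\<in>g. \<forall>p'\<in>g. p \<noteq> p' \<longrightarrow>
                    window Req rel pg L p \<inter> window Req rel pg L p' = {}"
    and lp: "lp_feasible P Req rel pg L T x"
    and "1 \<le> t1" and "t1 \<le> t2" and "t2 \<le> T"
  shows "int (card {(p, t) \<in> tentative_schedule G x T \<alpha>. t \<in> {t1..t2} \<and> p \<in> g})
           \<le> \<lfloor>y_cum x g t2 - \<alpha> g\<rfloor> - \<lfloor>y_cum x g (t1 - 1) - \<alpha> g\<rfloor>"
proof -
  have zero: "\<forall>p\<in>P. \<forall>t\<in>{1..T}. t \<notin> window Req rel pg L p \<longrightarrow> x p t = 0"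
    and nonneg: "\<forall>p\<in>P. \<forall>t\<in>{1..T}. 0 \<le> x p t"
    using lp unfolding lp_feasible_def by auto
  have unique: "p = p'" if "p \<in> g" "p' \<in> g" "t \<in> {1..T}" "0 < x p t" "0 < x p' t" for p p' t
  proof -
    have "t \<in> window Req rel pg L p \<inter> window Req rel pg L p'"
      using that zero \<open>g \<subseteq> P\<close> by force
    then show ?thesis
      using windows that(1,2) by blast
  qed
  have "finite g"
    using \<open>finite P\<close> \<open>g \<subseteq> P\<close> by (rule finite_subset[rotated])
  then have mono: "y_cum x g s \<le> y_cum x g s'" if "s \<le> s'" "s' \<le> t2" for s s'
    using nonneg \<open>g \<subseteq> P\<close> that \<open>t2 \<le> T\<close> by (intro y_cum_mono) auto
  have "card {(p, t) \<in> tentative_schedule G x T \<alpha>. t \<in> {t1..t2} \<and> p \<in> g}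
          \<le> card {t \<in> {t1..t2}. \<exists>k::int. y_cum x g (t - 1) < k + \<alpha> g \<and> k + \<alpha> g \<le> y_cum x g t}"
    using \<open>g \<in> G\<close> disjoint unique by (rule card_group_transmissions_le_crossings)
  also have "int \<dots> \<le> \<lfloor>y_cum x g t2 - \<alpha> g\<rfloor> - \<lfloor>y_cum x g (t1 - 1) - \<alpha> g\<rfloor>"
    using mono \<open>1 \<le> t1\<close> \<open>t1 \<le> t2\<close> by (rule card_level_crossings_le)
  finally show ?thesis by simp
qed

lemma Q_temp_le_sum_floor_diffs:
  assumes "finite P" and "\<Union>G = P"
    and disjoint: "\<forall>g\<in>G. \<forall>g'\<in>G. g \<noteq> g' \<longrightarrow> g \<inter> g' = {}"
    and windows: "\<forall>g\<in>G. \<forall>p\<in>g. \<forall>p'\<in>g. p \<noteq> p' \<longrightarrow>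
                    window Req rel pg L p \<inter> window Req rel pg L p' = {}"
    and lp: "lp_feasible P Req rel pg L T x"
    and "1 \<le> t1" and "t1 \<le> t2" and "t2 \<le> T"
  shows "real (Q_temp G x T \<alpha> {t1..t2})
           \<le> (\<Sum>g\<in>G. real_of_int (\<lfloor>y_cum x g t2 - \<alpha> g\<rfloor> - \<lfloor>y_cum x g (t1 - 1) - \<alpha> g\<rfloor>))"
proof -
  have "finite G"
    using \<open>finite P\<close> \<open>\<Union>G = P\<close> by (simp add: finite_UnionD)
  have "{(p, t) \<in> tentative_schedule G x T \<alpha>. t \<in> {t1..t2}}
          = (\<Union>g\<in>G. {(p, t) \<in> tentative_schedule G x T \<alpha>. t \<in> {t1..t2} \<and> p \<in> g})"
    by (auto simp: tentative_schedule_def)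
  then have "Q_temp G x T \<alpha> {t1..t2}
               \<le> (\<Sum>g\<in>G. card {(p, t) \<in> tentative_schedule G x T \<alpha>. t \<in> {t1..t2} \<and> p \<in> g})"
    unfolding Q_temp_def using card_UN_le[OF \<open>finite G\<close>] by simp
  then have "real (Q_temp G x T \<alpha> {t1..t2})
               \<le> (\<Sum>g\<in>G. real (card {(p, t) \<in> tentative_schedule G x T \<alpha>. t \<in> {t1..t2} \<and> p \<in> g}))"
    unfolding of_nat_sum[symmetric] by (rule of_nat_mono)
  also have "\<dots> \<le> (\<Sum>g\<in>G. real_of_int (\<lfloor>y_cum x g t2 - \<alpha> g\<rfloor> - \<lfloor>y_cum x g (t1 - 1) - \<alpha> g\<rfloor>))"
  proof (rule sum_mono)
    fix g assume "g \<in> G"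
    then have "g \<subseteq> P"
      using \<open>\<Union>G = P\<close> by blast
    with \<open>g \<in> G\<close> have "int (card {(p, t) \<in> tentative_schedule G x T \<alpha>. t \<in> {t1..t2} \<and> p \<in> g})
                 \<le> \<lfloor>y_cum x g t2 - \<alpha> g\<rfloor> - \<lfloor>y_cum x g (t1 - 1) - \<alpha> g\<rfloor>"
      using windows
      by (intro card_group_transmissions_le_floor_diff[OF \<open>finite P\<close> _ _ disjoint _ lp assms(6-8)])
        auto
    then show "real (card {(p, t) \<in> tentative_schedule G x T \<alpha>. t \<in> {t1..t2} \<and> p \<in> g})
                 \<le> real_of_int (\<lfloor>y_cum x g t2 - \<alpha> g\<rfloor> - \<lfloor>y_cum x g (t1 - 1) - \<alpha> g\<rfloor>)"
      by (simp only: of_int_le_iff[symmetric] of_int_of_nat_eq)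
  qed
  finally show ?thesis .
qed

lemma sum_y_cum_increments_le:
  assumes "finite P" and "\<Union>G = P"
    and disjoint: "\<forall>g\<in>G. \<forall>g'\<in>G. g \<noteq> g' \<longrightarrow> g \<inter> g' = {}"
    and capacity: "\<forall>t\<in>{1..T}. (\<Sum>p\<in>P. x p t) \<le> 1"
    and "1 \<le> t1" and "t1 \<le> t2" and "t2 \<le> T"
  shows "(\<Sum>g\<in>G. y_cum x g t2 - y_cum x g (t1 - 1)) \<le> real t2 - real t1 + 1"
proof -
  have "\<forall>g\<in>G. finite g"
    using \<open>finite P\<close> \<open>\<Union>G = P\<close> by (metis Union_upper finite_subset)
  have "(\<Sum>g\<in>G. y_cum x g t2 - y_cum x g (t1 - 1)) = (\<Sum>g\<in>G. \<Sum>p\<in>g. \<Sum>t\<in>{t1..t2}. x p t)"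
    by (simp only: y_cum_diff[OF assms(5,6)])
  also have "\<dots> = (\<Sum>p\<in>P. \<Sum>t\<in>{t1..t2}. x p t)"
    using \<open>\<forall>g\<in>G. finite g\<close> sum.Union_disjoint[of G "\<lambda>p. \<Sum>t\<in>{t1..t2}. x p t"]
      disjoint \<open>\<Union>G = P\<close>
    by (simp add: pairwise_def disjnt_def)
  also have "\<dots> = (\<Sum>t\<in>{t1..t2}. \<Sum>p\<in>P. x p t)"
    by (rule sum.swap)
  also have "\<dots> \<le> (\<Sum>t\<in>{t1..t2}. 1)"
    using capacity assms(5-7) by (intro sum_mono) auto
  also have "\<dots> = real t2 - real t1 + 1"
    using assms(6) by (simp add: of_nat_diff)
  finally show ?thesis .
qed

lemma measurable_Q_temp:
  assumes "finite (\<Union>G)"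
  defines "M \<equiv> PiM G (\<lambda>_. uniform_measure lborel {0..1::real})"
  shows "(\<lambda>\<alpha>. real (Q_temp G x T \<alpha> I)) \<in> borel_measurable M"
proof -
  define C where "C = (\<Union>G) \<times> ({1..T} \<inter> I)"
  have "finite G"
    using assms(1) by (rule finite_UnionD)
  have component: "{\<alpha> \<in> space M. \<alpha> g \<in> S} \<in> sets M" if "g \<in> G" and "S \<in> sets borel" for g S
  proof -
    have "(\<lambda>\<alpha>. \<alpha> g) \<in> measurable M (uniform_measure lborel {0..1})"
      unfolding M_def by (rule measurable_component_singleton[OF that(1)])
    moreover have "S \<in> sets (uniform_measure lborel {0..1})"
      using that(2) by simp
    ultimately have "(\<lambda>\<alpha>. \<alpha> g) -` S \<inter> space M \<in> sets M"
      by (rule measurable_sets)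
    then show ?thesis
      by (simp add: vimage_def Int_def conj_commute)
  qed
  have transmitted: "{\<alpha> \<in> space M. (p, t) \<in> tentative_schedule G x T \<alpha>} \<in> sets M" for p t
  proof -
    have "{\<alpha> \<in> space M. (p, t) \<in> tentative_schedule G x T \<alpha>}
            = (\<Union>g\<in>{g \<in> G. p \<in> g \<and> t \<in> {1..T} \<and> 0 < x p t}. \<Union>k::int.
                 {\<alpha> \<in> space M. \<alpha> g \<in> {y_cum x g (t - 1) - k<..y_cum x g t - k}})"
      unfolding tentative_schedule_def by (auto simp: algebra_simps)
    also have "\<dots> \<in> sets M"
    proof (rule sets.finite_UN)
      show "finite {g \<in> G. p \<in> g \<and> t \<in> {1..T} \<and> 0 < x p t}"
        using \<open>finite G\<close> by simp
      fix g assume "g \<in> {g \<in> G. p \<in> g \<and> t \<in> {1..T} \<and> 0 < x p t}"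
      then show "(\<Union>k::int. {\<alpha> \<in> space M. \<alpha> g \<in> {y_cum x g (t - 1) - k<..y_cum x g t - k}}) \<in> sets M"
        by (intro sets.countable_UN image_subsetI component) auto
    qed
    finally show ?thesis .
  qed
  have "real (Q_temp G x T \<alpha> I) = (\<Sum>z\<in>C. if z \<in> tentative_schedule G x T \<alpha> then 1 else 0)" for \<alpha>
  proof -
    have "{(p, t) \<in> tentative_schedule G x T \<alpha>. t \<in> I} = {z \<in> C. z \<in> tentative_schedule G x T \<alpha>}"
      unfolding C_def tentative_schedule_def by auto
    then show ?thesis
      using assms(1) unfolding Q_temp_def C_def by (simp add: sum.inter_filter[symmetric])
  qed
  moreover have "(\<lambda>\<alpha>. \<Sum>z\<in>C. if z \<in> tentative_schedule G x T \<alpha> then 1 else 0 :: real) \<in> borel_measurable M"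
    using transmitted by (intro borel_measurable_sum measurable_If_set) auto
  ultimately show ?thesis
    by simp
qed

lemma exp_neg_le_inverse_cube:
  fixes \<epsilon> L T :: real
  assumes "0 < \<epsilon>" and "\<epsilon> \<le> 1" and "1 \<le> T" and "0 < L" and "1 / \<epsilon> ^ 3 * ln T \<le> L"
  shows "exp (- 2 * (6 * \<epsilon> * L)\<^sup>2 / (2 * L)) \<le> 1 / T ^ 3"
proof -
  have "0 \<le> ln T"
    using \<open>1 \<le> T\<close> by simp
  have "ln T \<le> \<epsilon>\<^sup>2 * L * \<epsilon>"
    using mult_left_mono[OF assms(5), of "\<epsilon> ^ 3"] \<open>0 < \<epsilon>\<close>
    by (simp add: power2_eq_square power3_eq_cube mult_ac)
  also have "\<dots> \<le> \<epsilon>\<^sup>2 * L"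
    using assms(1,2,4) by (simp add: mult_left_le)
  finally have "3 * ln T \<le> 2 * (6 * \<epsilon> * L)\<^sup>2 / (2 * L)"
    using \<open>0 \<le> ln T\<close> \<open>0 < L\<close> by (simp add: power2_eq_square field_simps)
  then have "exp (- 2 * (6 * \<epsilon> * L)\<^sup>2 / (2 * L)) \<le> exp (- (3 * ln T))"
    by simp
  also have "\<dots> = 1 / T ^ 3"
    using \<open>1 \<le> T\<close> by (simp add: exp_minus exp_of_nat_mult[of 3, simplified] inverse_eq_divide)
  finally show ?thesis .
qed

lemma sum_increments_add_le_sum_floor_diffs:
  assumes "finite P" and "\<Union>G = P"
    and "\<forall>g\<in>G. \<forall>g'\<in>G. g \<noteq> g' \<longrightarrow> g \<inter> g' = {}"
    and "\<forall>g\<in>G. \<forall>p\<in>g. \<forall>p'\<in>g. p \<noteq> p' \<longrightarrow>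
               window Req rel pg L p \<inter> window Req rel pg L p' = {}"
    and lp: "lp_feasible P Req rel pg L T x"
    and t_bounds: "1 \<le> t1" "t1 \<le> t2" "t2 \<le> T"
    and "0 < c" and "c \<le> OF G x T \<alpha> t1 t2"
  shows "(\<Sum>g\<in>G. y_cum x g t2 - y_cum x g (t1 - 1)) + c
           \<le> (\<Sum>g\<in>G. real_of_int (\<lfloor>y_cum x g t2 - \<alpha> g\<rfloor> - \<lfloor>y_cum x g (t1 - 1) - \<alpha> g\<rfloor>))"
proof -
  have "\<forall>t\<in>{1..T}. (\<Sum>p\<in>P. x p t) \<le> 1"
    using lp unfolding lp_feasible_def by blast
  then have "(\<Sum>g\<in>G. y_cum x g t2 - y_cum x g (t1 - 1)) \<le> real t2 - real t1 + 1"
    by (rule sum_y_cum_increments_le[OF assms(1-3) _ t_bounds])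
  also have "\<dots> + c \<le> real (Q_temp G x T \<alpha> {t1..t2})"
    using \<open>0 < c\<close> \<open>c \<le> OF G x T \<alpha> t1 t2\<close> unfolding OF_def
    by (simp add: max_def split: if_splits)
  also have "\<dots> \<le> (\<Sum>g\<in>G. real_of_int (\<lfloor>y_cum x g t2 - \<alpha> g\<rfloor> - \<lfloor>y_cum x g (t1 - 1) - \<alpha> g\<rfloor>))"
    by (rule Q_temp_le_sum_floor_diffs[OF assms(1-5) t_bounds])
  finally show ?thesis
    by simp
qed

lemma measure_OF_ge_le:
  assumes "finite P" and "\<Union>G = P"
    and "\<forall>g\<in>G. \<forall>g'\<in>G. g \<noteq> g' \<longrightarrow> g \<inter> g' = {}"
    and "\<forall>g\<in>G. \<forall>p\<in>g. \<forall>p'\<in>g. p \<noteq> p' \<longrightarrow>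
               window Req rel pg L p \<inter> window Req rel pg L p' = {}"
    and "lp_feasible P Req rel pg L T x"
    and "1 \<le> t1" "t1 \<le> t2" "t2 \<le> T"
    and "0 < c" and "real (card G) \<le> n"
  defines "M \<equiv> PiM G (\<lambda>_. uniform_measure lborel {0..1::real})"
  shows "measure M {\<alpha> \<in> space M. c \<le> OF G x T \<alpha> t1 t2} \<le> exp (- 2 * c\<^sup>2 / n)"
proof -
  define F where "F = {\<alpha> \<in> space M. (\<Sum>g\<in>G. y_cum x g t2 - y_cum x g (t1 - 1)) + c \<le>
      (\<Sum>g\<in>G. real_of_int (\<lfloor>y_cum x g t2 - \<alpha> g\<rfloor> - \<lfloor>y_cum x g (t1 - 1) - \<alpha> g\<rfloor>))}"
  interpret M: prob_space M
    unfolding M_def by (intro prob_space_PiM prob_space_uniform_measure) simp_all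
  have "finite G"
    using assms(1,2) by (simp add: finite_UnionD)
  have F: "F \<in> sets M \<and> measure M F \<le> exp (- 2 * c\<^sup>2 / n)"
    unfolding F_def M_def using \<open>finite G\<close> \<open>0 < c\<close> \<open>real (card G) \<le> n\<close>
    by (rule prob_sum_floor_diffs_ge)
  have "{\<alpha> \<in> space M. c \<le> OF G x T \<alpha> t1 t2} \<subseteq> F"
    using sum_increments_add_le_sum_floor_diffs[OF assms(1-8) \<open>0 < c\<close>] unfolding F_def by blast
  then have "measure M {\<alpha> \<in> space M. c \<le> OF G x T \<alpha> t1 t2} \<le> measure M F"
    using F by (intro M.finite_measure_mono) simp_all
  also have "\<dots> \<le> exp (- 2 * c\<^sup>2 / n)"
    using F by simp
  finally show ?thesis .
qed

theorem lemma2p13: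
  fixes P :: "'p set" and Req :: "'r set" and rel :: "'r \<Rightarrow> nat" and pg :: "'r \<Rightarrow> 'p"
    and Lstar :: nat and x :: "'p \<Rightarrow> nat \<Rightarrow> real" and G :: "'p set set"
    and \<epsilon> :: real and t1 t2 :: nat
  assumes "finite P" and "finite Req" and "\<forall>\<rho>\<in>Req. pg \<rho> \<in> P"
    and "Lstar = opt_max_flow Req rel pg"
    and "\<forall>\<rho>\<in>Req. \<forall>\<rho>'\<in>Req. pg \<rho> = pg \<rho>' \<and> rel \<rho> < rel \<rho>' \<and>
           \<not> (\<exists>\<rho>''\<in>Req. pg \<rho>'' = pg \<rho> \<and> rel \<rho> < rel \<rho>'' \<and> rel \<rho>'' < rel \<rho>')
           \<longrightarrow> int (rel \<rho>') - int (rel \<rho>) \<le> int Lstar - 1"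
    and "lp_feasible P Req rel pg Lstar (horizon P Req rel) x"
    and "\<Union>G = P" and "\<forall>g\<in>G. g \<noteq> {}"
    and "\<forall>g\<in>G. \<forall>g'\<in>G. g \<noteq> g' \<longrightarrow> g \<inter> g' = {}"
    and "card G \<le> 2 * Lstar"
    and "\<forall>g\<in>G. \<forall>p\<in>g. \<forall>p'\<in>g. p \<noteq> p' \<longrightarrow>
           window Req rel pg Lstar p \<inter> window Req rel pg Lstar p' = {}"
    and "0 < \<epsilon>" and "\<epsilon> \<le> 1"
    and "real Lstar \<ge> 1 / \<epsilon> ^ 3 * ln (real (horizon P Req rel))"
    and "1 \<le> t1" and "t1 \<le> t2" and "t2 \<le> horizon P Req rel"
  shows "let M = PiM G (\<lambda>_. uniform_measure lborel {0..1::real});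
             E = {\<alpha> \<in> space M. OF G x (horizon P Req rel) \<alpha> t1 t2 \<ge> 6 * \<epsilon> * real Lstar}
         in E \<in> sets M \<and> measure M E \<le> 1 / real (horizon P Req rel) ^ 3"
proof -
  define T where "T = horizon P Req rel"
  define M where "M = PiM G (\<lambda>_. uniform_measure lborel {0..1::real})"
  interpret M: prob_space M
    unfolding M_def by (intro prob_space_PiM prob_space_uniform_measure) simp_all
  have [measurable]: "(\<lambda>\<alpha>. real (Q_temp G x T \<alpha> {t1..t2})) \<in> borel_measurable M"
    unfolding M_def using assms(1,7) by (intro measurable_Q_temp) simp
  have "{\<alpha> \<in> space M. 6 * \<epsilon> * real Lstar \<le> OF G x T \<alpha> t1 t2} \<in> sets M"
    unfolding OF_def by measurable
  moreover have "measure M {\<alpha> \<in> space M. 6 * \<epsilon> * real Lstar \<le> OF G x T \<alpha> t1 t2} \<le> 1 / real T ^ 3"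
  proof (cases "Lstar = 0")
    case True
    then have "T = 1"
      using assms(12,14,15-17) unfolding T_def by (simp add: divide_le_0_iff ln_le_zero_iff)
    then show ?thesis
      by simp
  next
    case False
    have "measure M {\<alpha> \<in> space M. 6 * \<epsilon> * real Lstar \<le> OF G x T \<alpha> t1 t2}
            \<le> exp (- 2 * (6 * \<epsilon> * real Lstar)\<^sup>2 / (2 * real Lstar))"
      unfolding M_def T_def using assms False
      by (intro measure_OF_ge_le[where Req = Req and rel = rel and pg = pg and L = Lstar]) simp_all
    also have "\<dots> \<le> 1 / real T ^ 3"
      using assms(12-17) False unfolding T_def by (intro exp_neg_le_inverse_cube) simp_all
    finally show ?thesis .
  qed
  ultimately show ?thesis
    unfolding Let_def M_def T_def by simp
qed

end
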